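(* If $f\colon[a,b]\to\mathbb{R}$ is Laplace integrable on $[a,b]$ and $f\geqslant0$ almost everywhere on $[a,b]$, then $f$ is Lebesgue integrable on $[a,b]$.
   Context: Laplace integral on $[a,b]$: with lower/upper Laplace derivates $\underline{LD}_1F(x)$, $\overline{LD}_1F(x)$ being the minimum of the $\liminf$'s, resp. maximum of the $\limsup$'s, as $s\to\infty$ of $s^2\int_0^\delta e^{-st}[F(x+t)-F(x)]dt$ and $(-s^2)\int_0^\delta e^{-st}[F(x-t)-F(x)]dt$ (one-sided at endpoints), a major function of $f$ is a continuous $U$ with $\underline{LD}_1U\geqslant f$, $\underline{LD}_1U>-\infty$ everywhere on $[a,b]$, a minor function a continuous $V$ with $\overline{LD}_1V\leqslant f$, $\overline{LD}_1V<\infty$ everywhere, and $f$ is Laplace integrable if $\sup_V(V(b)-V(a))=\inf_U(U(b)-U(a))$ is finite. *)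

theory Defs
  imports "HOL-Analysis.Analysis"
begin

definition lap_right :: "(real \<Rightarrow> real) \<Rightarrow> real \<Rightarrow> real \<Rightarrow> real \<Rightarrow> real" where
  "lap_right F x d s = s^2 * integral {0..d} (\<lambda>t. exp (- s * t) * (F (x + t) - F x))"

definition lap_left :: "(real \<Rightarrow> real) \<Rightarrow> real \<Rightarrow> real \<Rightarrow> real \<Rightarrow> real" where
  "lap_left F x d s = - (s^2 * integral {0..d} (\<lambda>t. exp (- s * t) * (F (x - t) - F x)))"

definition lap_delta :: "real \<Rightarrow> real \<Rightarrow> real \<Rightarrow> real" where
  "lap_delta a b x = (if x = a \<or> x = b then b - a else min (x - a) (b - x))"

definition lower_LD :: "real \<Rightarrow> real \<Rightarrow> (real \<Rightarrow> real) \<Rightarrow> real \<Rightarrow> ereal" where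
  "lower_LD a b F x =
     (if x = a then Liminf at_top (\<lambda>s. ereal (lap_right F x (lap_delta a b x) s))
      else if x = b then Liminf at_top (\<lambda>s. ereal (lap_left F x (lap_delta a b x) s))
      else min (Liminf at_top (\<lambda>s. ereal (lap_right F x (lap_delta a b x) s)))
               (Liminf at_top (\<lambda>s. ereal (lap_left F x (lap_delta a b x) s))))"

definition upper_LD :: "real \<Rightarrow> real \<Rightarrow> (real \<Rightarrow> real) \<Rightarrow> real \<Rightarrow> ereal" where
  "upper_LD a b F x =
     (if x = a then Limsup at_top (\<lambda>s. ereal (lap_right F x (lap_delta a b x) s))
      else if x = b then Limsup at_top (\<lambda>s. ereal (lap_left F x (lap_delta a b x) s))
      else max (Limsup at_top (\<lambda>s. ereal (lap_right F x (lap_delta a b x) s)))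
               (Limsup at_top (\<lambda>s. ereal (lap_left F x (lap_delta a b x) s))))"

definition laplace_major :: "real \<Rightarrow> real \<Rightarrow> (real \<Rightarrow> real) \<Rightarrow> (real \<Rightarrow> real) \<Rightarrow> bool" where
  "laplace_major a b f U \<longleftrightarrow> continuous_on {a..b} U \<and>
     (\<forall>x\<in>{a..b}. lower_LD a b U x \<ge> ereal (f x) \<and> lower_LD a b U x > -\<infinity>)"

definition laplace_minor :: "real \<Rightarrow> real \<Rightarrow> (real \<Rightarrow> real) \<Rightarrow> (real \<Rightarrow> real) \<Rightarrow> bool" where
  "laplace_minor a b f V \<longleftrightarrow> continuous_on {a..b} V \<and>
     (\<forall>x\<in>{a..b}. upper_LD a b V x \<le> ereal (f x) \<and> upper_LD a b V x < \<infinity>)"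

definition laplace_integrable_on :: "(real \<Rightarrow> real) \<Rightarrow> real \<Rightarrow> real \<Rightarrow> bool" where
  "laplace_integrable_on f a b \<longleftrightarrow>
     (\<exists>I::real. (SUP V\<in>{V. laplace_minor a b f V}. ereal (V b - V a)) = ereal I \<and>
                (INF U\<in>{U. laplace_major a b f U}. ereal (U b - U a)) = ereal I)"

end

theory Submission
  imports Defs "HOL-Real_Asymp.Real_Asymp"
begin

(* Since the kernel s\<^sup>2 exp (- s t) has first moment tending to 1, an increment of F at x
   that is at least (at most) linear with slope c forces the right Laplace quotients at x to be
   eventually above (below) any c' < c (c' > c). Hence a continuous function with nonnegative
   lower right Laplace derivate is nondecreasing. If f \<ge> 0 outside a null set N, adding to a
   major function U a continuous nondecreasing function of arbitrarily small variation with
   infinite right derivative on N yields such a function, so U is nondecreasing; likewise U - V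
   is nondecreasing for every minor function V.

   For continuous nondecreasing G, the right Laplace quotients at s = k with the fixed window
   b - a are continuous in x and, by Fubini, have integral at most G b - G a over [a, b]; by
   Fatou so does their liminf. For majors U n and minors V n with U n - V n of vanishing
   variation, the infimum over n of these liminfs for U n - V n is 0 almost everywhere, and
   there f equals the Borel function inf n (liminf k of the quotients of U n), whose integral
   is at most U 0 b - U 0 a. *)

section \<open>Right Laplace quotients\<close>

lemma laplace_first_moment:
  fixes s d :: real
  assumes "s \<noteq> 0" "0 \<le> d"
  shows "s\<^sup>2 * integral {0..d} (\<lambda>t. t * exp (- s * t)) = 1 - exp (- s * d) * (1 + s * d)"
proof -
  define P where "P t = - (t / s + 1 / s\<^sup>2) * exp (- s * t)" for t
  have "((\<lambda>t. t * exp (- s * t)) has_integral P d - P 0) {0..d}"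
  proof (rule fundamental_theorem_of_calculus)
    fix t assume "t \<in> {0..d}"
    show "(P has_vector_derivative t * exp (- s * t)) (at t within {0..d})"
      unfolding P_def has_real_derivative_iff_has_vector_derivative[symmetric]
      using assms by (auto intro!: derivative_eq_intros simp: field_simps power2_eq_square)
  qed (use assms in simp)
  moreover have "s\<^sup>2 * (P d - P 0) = 1 - exp (- s * d) * (1 + s * d)"
    using assms by (simp add: P_def field_simps power2_eq_square)
  ultimately show ?thesis by (simp add: integral_unique)
qed

lemma tendsto_laplace_first_moment:
  fixes d :: real
  assumes "0 < d"
  shows "((\<lambda>s. s\<^sup>2 * integral {0..d} (\<lambda>t. t * exp (- s * t))) \<longlongrightarrow> 1) at_top"
proof -
  have "\<forall>\<^sub>F s in at_top. 1 - exp (- s * d) * (1 + s * d) = s\<^sup>2 * integral {0..d} (\<lambda>t. t * exp (- s * t))"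
    using eventually_gt_at_top[of 0] by eventually_elim (use assms laplace_first_moment in auto)
  moreover have "((\<lambda>s. 1 - exp (- s * d) * (1 + s * d)) \<longlongrightarrow> 1) at_top"
    using assms by real_asymp
  ultimately show ?thesis by (rule Lim_transform_eventually[rotated])
qed

lemma laplace_first_moment_le_1:
  fixes s d :: real
  assumes "0 \<le> s" "0 \<le> d"
  shows "s\<^sup>2 * integral {0..d} (\<lambda>t. t * exp (- s * t)) \<le> 1"
proof (cases "s = 0")
  case False
  then show ?thesis using laplace_first_moment[of s d] assms by simp
qed simp

lemma lap_integrand_integrable:
  fixes F :: "real \<Rightarrow> real"
  assumes "continuous_on {x..x + d} F"
  shows "(\<lambda>t. exp (- s * t) * (F (x + t) - F x)) integrable_on {0..d}"
proof -
  have "continuous_on {0..d} (\<lambda>t. F (x + t))"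
    by (rule continuous_on_compose2[OF assms]) (auto intro!: continuous_intros)
  then show ?thesis by (auto intro!: continuous_intros integrable_continuous_real)
qed

lemma lap_right_uminus: "lap_right (\<lambda>y. - F y) x d s = - lap_right F x d s"
proof -
  have "(\<lambda>t. exp (- s * t) * (- F (x + t) - - F x)) = (\<lambda>t. - (exp (- s * t) * (F (x + t) - F x)))"
    by (simp add: algebra_simps)
  then show ?thesis unfolding lap_right_def by simp
qed

lemma lap_right_add:
  assumes "continuous_on {x..x + d} U" "continuous_on {x..x + d} V"
  shows "lap_right (\<lambda>y. U y + V y) x d s = lap_right U x d s + lap_right V x d s"
proof -
  have split: "(\<lambda>t. exp (- s * t) * ((U (x + t) + V (x + t)) - (U x + V x))) =
        (\<lambda>t. exp (- s * t) * (U (x + t) - U x) + exp (- s * t) * (V (x + t) - V x))"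
    by (simp add: algebra_simps)
  show ?thesis
    unfolding lap_right_def split
      integral_add[OF lap_integrand_integrable[OF assms(1)] lap_integrand_integrable[OF assms(2)]]
    by (rule distrib_left)
qed

lemma lap_right_diff:
  assumes "continuous_on {x..x + d} U" "continuous_on {x..x + d} V"
  shows "lap_right (\<lambda>y. U y - V y) x d s = lap_right U x d s - lap_right V x d s"
  using lap_right_add[of x d U "\<lambda>y. - V y" s] assms lap_right_uminus[of V x d s]
  by (simp add: continuous_on_minus)

lemma lap_right_nonneg:
  fixes F :: "real \<Rightarrow> real"
  assumes "continuous_on {x..x + d} F" "mono_on {x..x + d} F"
  shows "0 \<le> lap_right F x d s"
proof -
  have "0 \<le> integral {0..d} (\<lambda>t. exp (- s * t) * (F (x + t) - F x))"
    using assms(2) by (intro integral_nonneg lap_integrand_integrable[OF assms(1)])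
      (auto dest: mono_onD[of _ F x "x + _"])
  then show ?thesis unfolding lap_right_def by simp
qed

lemma lap_integrand_lower_bound:
  fixes F :: "real \<Rightarrow> real"
  assumes "0 \<le> s" "0 \<le> t" "t \<le> \<delta>" "0 \<le> M"
    and linear: "t \<le> \<eta> \<Longrightarrow> c * t \<le> F (x + t) - F x"
    and bounded: "- M \<le> F (x + t) - F x"
  shows "c * (t * exp (- s * t)) - (M + \<bar>c\<bar> * \<delta>) * exp (- s * \<eta>) \<le> exp (- s * t) * (F (x + t) - F x)"
proof (cases "t \<le> \<eta>")
  case True
  have "exp (- s * t) * (c * t) \<le> exp (- s * t) * (F (x + t) - F x)"
    using linear[OF True] by (intro mult_left_mono) auto
  moreover have "0 \<le> (M + \<bar>c\<bar> * \<delta>) * exp (- s * \<eta>)"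
    using assms by simp
  ultimately show ?thesis by (simp add: algebra_simps)
next
  case False
  have exp_le: "exp (- s * t) \<le> exp (- s * \<eta>)"
    using False assms by (simp add: mult_left_mono)
  have "- M * exp (- s * \<eta>) \<le> - M * exp (- s * t)"
    using mult_left_mono[OF exp_le \<open>0 \<le> M\<close>] by simp
  also have "\<dots> \<le> exp (- s * t) * (F (x + t) - F x)"
    using mult_left_mono[OF bounded, of "exp (- s * t)"] by (simp add: algebra_simps)
  finally have "- M * exp (- s * \<eta>) \<le> exp (- s * t) * (F (x + t) - F x)" .
  moreover have "c * (t * exp (- s * t)) \<le> \<bar>c\<bar> * (\<delta> * exp (- s * \<eta>))"
    using assms exp_le by (intro order.trans[OF abs_ge_self[of "c * _"]])
      (auto simp: abs_mult intro!: mult_left_mono mult_mono)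
  ultimately show ?thesis by (simp add: algebra_simps)
qed

lemma lap_right_eventually_gt:
  fixes F :: "real \<Rightarrow> real"
  assumes "0 < \<eta>" "\<eta> \<le> \<delta>" and cont: "continuous_on {x..x + \<delta>} F"
    and linear: "\<And>t. t \<in> {0..\<eta>} \<Longrightarrow> c * t \<le> F (x + t) - F x"
    and "c' < c"
  shows "\<forall>\<^sub>F s in at_top. c' < lap_right F x \<delta> s"
proof -
  obtain M where M: "0 \<le> M" "\<And>t. t \<in> {0..\<delta>} \<Longrightarrow> - M \<le> F (x + t) - F x"
  proof -
    have "continuous_on {0..\<delta>} (\<lambda>t. F (x + t) - F x)"
      by (auto intro!: continuous_intros continuous_on_compose2[OF cont])
    from compact_imp_bounded[OF compact_continuous_image[OF this compact_Icc]]
    obtain B where "\<forall>t\<in>{0..\<delta>}. \<bar>F (x + t) - F x\<bar> \<le> B"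
      by (auto simp: bounded_real)
    then show thesis by (intro that[of "\<bar>B\<bar>"]) (force simp: abs_le_iff)+
  qed
  define K where "K = M + \<bar>c\<bar> * \<delta>"
  \<comment> \<open>\<open>s\<^sup>2\<close> times the integral of the bound of \<open>lap_integrand_lower_bound\<close>\<close>
  define R where
    "R s = c * (s\<^sup>2 * integral {0..\<delta>} (\<lambda>t. t * exp (- s * t))) - K * \<delta> * (s\<^sup>2 * exp (- s * \<eta>))"
    for s
  have "(R \<longlongrightarrow> c * 1 - K * \<delta> * 0) at_top"
    unfolding R_def using assms
    by (intro tendsto_intros tendsto_laplace_first_moment) (simp, real_asymp)
  then have "\<forall>\<^sub>F s in at_top. c' < R s"
    using \<open>c' < c\<close> by (intro order_tendstoD) auto
  moreover have "\<forall>\<^sub>F s in at_top. R s \<le> lap_right F x \<delta> s"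
    using eventually_ge_at_top[of 0]
  proof eventually_elim
    case (elim s)
    have "((\<lambda>t. c * (t * exp (- s * t)) - K * exp (- s * \<eta>)) has_integral
        c * integral {0..\<delta>} (\<lambda>t. t * exp (- s * t)) - \<delta> * (K * exp (- s * \<eta>))) {0..\<delta>}"
      using assms has_integral_const_real[of "K * exp (- s * \<eta>)" 0 \<delta>]
      by (intro has_integral_diff has_integral_mult_right integrable_integral integrable_continuous_real)
        (auto intro!: continuous_intros)
    then have "c * integral {0..\<delta>} (\<lambda>t. t * exp (- s * t)) - \<delta> * (K * exp (- s * \<eta>))
          \<le> integral {0..\<delta>} (\<lambda>t. exp (- s * t) * (F (x + t) - F x))"
      using lap_integrand_lower_bound[of s _ \<delta> M \<eta> c F x] elim M linear unfolding K_def
      by (intro has_integral_le[OF _ integrable_integral[OF lap_integrand_integrable[OF cont]]]) auto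
    then have "s\<^sup>2 * (c * integral {0..\<delta>} (\<lambda>t. t * exp (- s * t)) - \<delta> * (K * exp (- s * \<eta>)))
          \<le> lap_right F x \<delta> s"
      unfolding lap_right_def by (intro mult_left_mono) auto
    then show ?case by (simp add: R_def algebra_simps)
  qed
  ultimately show ?thesis by eventually_elim simp
qed

lemma lap_right_eventually_less:
  fixes F :: "real \<Rightarrow> real"
  assumes "0 < \<eta>" "\<eta> \<le> \<delta>" and cont: "continuous_on {x..x + \<delta>} F"
    and linear: "\<And>t. t \<in> {0..\<eta>} \<Longrightarrow> F (x + t) - F x \<le> c * t"
    and "c < c'"
  shows "\<forall>\<^sub>F s in at_top. lap_right F x \<delta> s < c'"
proof -
  have "\<forall>\<^sub>F s in at_top. - c' < lap_right (\<lambda>y. - F y) x \<delta> s"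
    using assms by (intro lap_right_eventually_gt[where c = "- c"]) (force intro!: continuous_intros)+
  then show ?thesis by (simp add: lap_right_uminus)
qed

lemma lap_right_eventually_gt_if_superlinear:
  fixes F :: "real \<Rightarrow> real"
  assumes "0 < \<delta>" "continuous_on {x..x + \<delta>} F"
    and superlinear: "\<And>K. \<exists>\<eta>>0. \<forall>t\<in>{0..\<eta>}. K * t \<le> F (x + t) - F x"
  shows "\<forall>\<^sub>F s in at_top. c < lap_right F x \<delta> s"
proof -
  obtain \<eta> where "0 < \<eta>" "\<forall>t\<in>{0..\<eta>}. (c + 1) * t \<le> F (x + t) - F x"
    using superlinear by blast
  then show ?thesis
    using assms by (intro lap_right_eventually_gt[of "min \<eta> \<delta>" _ _ _ "c + 1"]) auto
qed

lemma lap_right_window_change: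
  fixes F :: "real \<Rightarrow> real"
  assumes cont: "continuous_on {x..x + d2} F" and "0 < d1" "d1 \<le> d2"
  shows "((\<lambda>s. lap_right F x d2 s - lap_right F x d1 s) \<longlongrightarrow> 0) at_top"
proof -
  define h where "h s t = exp (- s * t) * (F (x + t) - F x)" for s t
  have split: "lap_right F x d2 s - lap_right F x d1 s = s\<^sup>2 * integral {d1..d2} (h s)" for s
  proof -
    have "integral {0..d1} (h s) + integral {d1..d2} (h s) = integral {0..d2} (h s)"
      using assms unfolding h_def by (intro Henstock_Kurzweil_Integration.integral_combine lap_integrand_integrable) auto
    then show ?thesis unfolding lap_right_def h_def[symmetric] by (metis distrib_left add_diff_cancel_left')
  qed
  have cont_tail: "continuous_on {d1..d2} (\<lambda>t. F (x + t) - F x)"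
    using assms by (auto intro!: continuous_intros continuous_on_compose2[OF cont])
  obtain B where B: "\<forall>t\<in>{d1..d2}. \<bar>F (x + t) - F x\<bar> \<le> B"
    using compact_imp_bounded[OF compact_continuous_image[OF cont_tail compact_Icc]]
    by (auto simp: bounded_real)
  have "\<forall>\<^sub>F s in at_top. norm (lap_right F x d2 s - lap_right F x d1 s) \<le> B * (d2 - d1) * (s\<^sup>2 * exp (- s * d1))"
    using eventually_ge_at_top[of 0]
  proof eventually_elim
    case (elim s)
    have "norm (integral {d1..d2} (h s)) \<le> integral {d1..d2} (\<lambda>t. exp (- s * d1) * B)"
    proof (rule integral_norm_bound_integral)
      show "h s integrable_on {d1..d2}"
        unfolding h_def by (intro integrable_continuous_real continuous_intros cont_tail)
      fix t assume t: "t \<in> {d1..d2}"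
      have "exp (- s * t) \<le> exp (- s * d1)" using t elim by (simp add: mult_left_mono)
      then show "norm (h s t) \<le> exp (- s * d1) * B"
        using B t by (auto simp: h_def abs_mult intro!: mult_mono)
    qed (intro integrable_continuous_real continuous_intros)
    also have "\<dots> = (d2 - d1) * (exp (- s * d1) * B)"
      using assms by (simp add: algebra_simps)
    finally have "s\<^sup>2 * norm (integral {d1..d2} (h s)) \<le> s\<^sup>2 * ((d2 - d1) * (exp (- s * d1) * B))"
      by (intro mult_left_mono) auto
    then show ?case unfolding split by (simp add: abs_mult algebra_simps)
  qed
  moreover have "((\<lambda>s. B * (d2 - d1) * (s\<^sup>2 * exp (- s * d1))) \<longlongrightarrow> 0) at_top"
    using assms by real_asymp
  ultimately show ?thesis by (rule Lim_null_comparison)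
qed

section \<open>Monotonicity from the lower right Laplace derivate\<close>

lemma lap_delta_bounds:
  assumes "x \<in> {a..<b}"
  shows "0 < lap_delta a b x" "x + lap_delta a b x \<le> b"
  using assms by (auto simp: lap_delta_def)

lemma continuous_on_lap_window:
  assumes "continuous_on {a..b} F" "x \<in> {a..<b}"
  shows "continuous_on {x..x + lap_delta a b x} F"
  using continuous_on_subset[OF assms(1)] lap_delta_bounds[OF assms(2)] assms(2) by auto

lemma laplace_major_eventually_gt:
  assumes "laplace_major a b f U" "x \<in> {a..<b}" "c < f x"
  shows "\<forall>\<^sub>F s in at_top. c < lap_right U x (lap_delta a b x) s"
proof -
  have "ereal (f x) \<le> lower_LD a b U x"
    using assms(1,2) by (auto simp: laplace_major_def)
  also have "\<dots> \<le> Liminf at_top (\<lambda>s. ereal (lap_right U x (lap_delta a b x) s))"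
    using assms(2) by (auto simp: lower_LD_def)
  finally have "\<forall>y<ereal (f x). \<forall>\<^sub>F s in at_top. y < ereal (lap_right U x (lap_delta a b x) s)"
    by (simp add: le_Liminf_iff)
  from this[rule_format, of "ereal c"] show ?thesis
    using assms(3) by simp
qed

lemma laplace_minor_eventually_less:
  assumes "laplace_minor a b f V" "x \<in> {a..<b}" "f x < c"
  shows "\<forall>\<^sub>F s in at_top. lap_right V x (lap_delta a b x) s < c"
proof -
  have "Limsup at_top (\<lambda>s. ereal (lap_right V x (lap_delta a b x) s)) \<le> upper_LD a b V x"
    using assms(2) by (auto simp: upper_LD_def)
  also have "\<dots> \<le> ereal (f x)"
    using assms(1,2) by (auto simp: laplace_minor_def)
  finally have "\<forall>y>ereal (f x). \<forall>\<^sub>F s in at_top. ereal (lap_right V x (lap_delta a b x) s) < y"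
    by (simp add: Limsup_le_iff)
  from this[rule_format, of "ereal c"] show ?thesis
    using assms(3) by simp
qed

lemma obtain_linear_decrease_point:
  fixes H :: "real \<Rightarrow> real"
  assumes "x \<le> y" "continuous_on {x..y} H" "H y + \<epsilon> * (y - x) < H x"
  obtains z where "z \<in> {x..<y}" "\<And>t. t \<in> {0..y - z} \<Longrightarrow> H (z + t) - H z \<le> - \<epsilon> * t"
proof -
  define K where "K u = H u + \<epsilon> * u" for u
  have "continuous_on {x..y} K"
    unfolding K_def using assms(2) by (intro continuous_intros)
  then obtain z where z: "z \<in> {x..y}" "\<And>u. u \<in> {x..y} \<Longrightarrow> K u \<le> K z"
    using continuous_attains_sup[OF compact_Icc] assms(1) by (metis atLeastAtMost_iff empty_iff order_refl)
  have "K y < K x"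
    using assms(3) by (simp add: K_def algebra_simps)
  with z(2)[of x] assms(1) have "z \<noteq> y" by force
  show thesis
  proof (rule that)
    show "z \<in> {x..<y}" using z(1) \<open>z \<noteq> y\<close> by auto
    fix t assume "t \<in> {0..y - z}"
    then have "K (z + t) \<le> K z" using z by (intro z(2)) auto
    then show "H (z + t) - H z \<le> - \<epsilon> * t" by (simp add: K_def algebra_simps)
  qed
qed

lemma mono_on_if_lap_right_eventually_gt:
  fixes H :: "real \<Rightarrow> real"
  assumes cont: "continuous_on {a..b} H"
    and gt: "\<And>x c. x \<in> {a..<b} \<Longrightarrow> c < 0 \<Longrightarrow> \<forall>\<^sub>F s in at_top. c < lap_right H x (lap_delta a b x) s"
  shows "mono_on {a..b} H"
proof (rule mono_onI, rule ccontr)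
  fix x y assume xy: "x \<in> {a..b}" "y \<in> {a..b}" "x \<le> y" and "\<not> H x \<le> H y"
  then have "x < y" "H y < H x" by (auto simp: order.order_iff_strict)
  define \<epsilon> where "\<epsilon> = (H x - H y) / (2 * (y - x))"
  have "0 < \<epsilon>" using \<open>x < y\<close> \<open>H y < H x\<close> by (simp add: \<epsilon>_def)
  have "\<epsilon> * (y - x) = (H x - H y) / 2"
    using \<open>x < y\<close> by (simp add: \<epsilon>_def field_simps)
  then have "H y + \<epsilon> * (y - x) < H x"
    using \<open>H y < H x\<close> by simp
  then obtain z where z: "z \<in> {x..<y}" "\<And>t. t \<in> {0..y - z} \<Longrightarrow> H (z + t) - H z \<le> - \<epsilon> * t"
    using obtain_linear_decrease_point[OF \<open>x \<le> y\<close> continuous_on_subset[OF cont]] xy by auto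
  have z_ab: "z \<in> {a..<b}" using z(1) xy by auto
  have below: "\<forall>\<^sub>F s in at_top. lap_right H z (lap_delta a b z) s < - \<epsilon> / 2"
    using lap_delta_bounds[OF z_ab] z \<open>0 < \<epsilon>\<close> continuous_on_lap_window[OF cont z_ab]
    by (intro lap_right_eventually_less[where \<eta> = "min (lap_delta a b z) (y - z)" and c = "- \<epsilon>"]) auto
  have above: "\<forall>\<^sub>F s in at_top. - \<epsilon> / 2 < lap_right H z (lap_delta a b z) s"
    using gt[OF z_ab] \<open>0 < \<epsilon>\<close> by simp
  show False
    using eventually_happens'[OF _ eventually_conj[OF below above]] by auto
qed

section \<open>Functions with infinite right derivative on a null set\<close>

lemma null_set_open_cover:
  fixes N :: "'a::euclidean_space set"
  assumes "N \<in> null_sets lebesgue" "0 < e"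
  obtains T where "open T" "N \<subseteq> T" "emeasure lebesgue T < ennreal e"
proof -
  obtain T where T: "open T" "N \<subseteq> T" "T - N \<in> lmeasurable" "emeasure lebesgue (T - N) < ennreal e"
    using sets_lebesgue_outer_open[OF null_setsD2[OF assms(1)] assms(2)] by blast
  have "T = (T - N) \<union> N"
    using T(2) by blast
  then have "emeasure lebesgue T = emeasure lebesgue (T - N)"
    using emeasure_Un_null_set[OF fmeasurableD[OF T(3)] assms(1)] by simp
  with T show thesis by (intro that[of T]) auto
qed

lemma indicator_integrable_on_Icc:
  fixes Q :: "real set"
  assumes "Q \<in> sets lebesgue"
  shows "indicat_real Q integrable_on {x..y}"
  using fmeasurable_Int_fmeasurable[OF lmeasurable_cbox assms, of x y]
  by (simp add: integrable_on_indicator Int_commute)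

lemma integral_indicator_Icc_le_measure:
  fixes Q :: "real set"
  assumes "Q \<in> fmeasurable lebesgue"
  shows "integral {x..y} (indicat_real Q) \<le> measure lebesgue Q"
proof -
  have "Q \<inter> {x..y} \<in> lmeasurable"
    using fmeasurable_Int_fmeasurable[OF assms, of "{x..y}"] by simp
  then show ?thesis
    using assms by (simp add: integral_indicator measure_mono_fmeasurable fmeasurableD)
qed

lemma integral_indicator_Icc_eq_length:
  fixes Q :: "real set"
  assumes "{x..y} \<subseteq> Q" "x \<le> y"
  shows "integral {x..y} (indicat_real Q) = y - x"
proof -
  have "integral {x..y} (indicat_real Q) = integral {x..y} (\<lambda>_. 1::real)"
    using assms by (intro integral_cong) (auto simp: indicator_def)
  then show ?thesis using assms by simp
qed

definition cover_primitive :: "real \<Rightarrow> (nat \<Rightarrow> real set) \<Rightarrow> real \<Rightarrow> real" where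
  "cover_primitive a T x = (\<Sum>k. integral {a..x} (indicat_real (T k)))"

context
  fixes T :: "nat \<Rightarrow> real set"
  assumes T_fmeasurable: "\<And>k. T k \<in> fmeasurable lebesgue"
    and T_summable: "summable (\<lambda>k. measure lebesgue (T k))"
begin

lemma integrable_indicator_cover: "indicat_real (T k) integrable_on {x..y}"
  using T_fmeasurable by (intro indicator_integrable_on_Icc fmeasurableD)

lemma norm_integral_indicator_cover_le: "norm (integral {x..y} (indicat_real (T k))) \<le> measure lebesgue (T k)"
  using integral_nonneg[OF integrable_indicator_cover] integral_indicator_Icc_le_measure[OF T_fmeasurable]
  by simp

lemma summable_integral_indicator_cover: "summable (\<lambda>k. integral {x..y} (indicat_real (T k)))"
  by (rule summable_comparison_test'[OF T_summable norm_integral_indicator_cover_le])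

lemma cover_primitive_diff:
  assumes "a \<le> x" "x \<le> y"
  shows "cover_primitive a T y - cover_primitive a T x = (\<Sum>k. integral {x..y} (indicat_real (T k)))"
proof -
  have "integral {a..y} (indicat_real (T k)) - integral {a..x} (indicat_real (T k))
      = integral {x..y} (indicat_real (T k))" for k
    using Henstock_Kurzweil_Integration.integral_combine[OF assms integrable_indicator_cover[of k]]
    by linarith
  then show ?thesis
    unfolding cover_primitive_def
    by (simp add: suminf_diff[OF summable_integral_indicator_cover summable_integral_indicator_cover])
qed

lemma mono_on_cover_primitive: "mono_on {a..} (cover_primitive a T)"
proof (rule mono_onI)
  fix x y assume "x \<in> {a..}" "y \<in> {a..}" "x \<le> y"
  then have "0 \<le> (\<Sum>k. integral {x..y} (indicat_real (T k)))"
    by (intro suminf_nonneg summable_integral_indicator_cover integral_nonneg integrable_indicator_cover) auto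
  with cover_primitive_diff[of a x y] \<open>x \<in> {a..}\<close> \<open>x \<le> y\<close> show "cover_primitive a T x \<le> cover_primitive a T y"
    by simp
qed

lemma continuous_on_cover_primitive: "continuous_on {a..b} (cover_primitive a T)"
proof -
  have "uniform_limit {a..b} (\<lambda>n x. \<Sum>k<n. integral {a..x} (indicat_real (T k))) (cover_primitive a T) sequentially"
    unfolding cover_primitive_def
    by (rule Weierstrass_m_test[OF norm_integral_indicator_cover_le T_summable])
  moreover have "continuous_on {a..b} (\<lambda>x. \<Sum>k<n. integral {a..x} (indicat_real (T k)))" for n
    by (intro continuous_on_sum indefinite_integral_continuous_1 integrable_indicator_cover)
  ultimately show ?thesis
    by (intro uniform_limit_theorem[where F = sequentially]) auto
qed

lemma cover_primitive_le: "cover_primitive a T x \<le> (\<Sum>k. measure lebesgue (T k))"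
  unfolding cover_primitive_def
  by (intro suminf_le summable_integral_indicator_cover T_summable integral_indicator_Icc_le_measure T_fmeasurable)

text \<open>Near a point of \<open>\<Inter>k<n. T k\<close>, the first \<open>n\<close> terms alone give slope \<open>n\<close>.\<close>
lemma cover_primitive_superlinear:
  assumes "\<And>k. open (T k)" "x \<in> (\<Inter>k. T k)" "a \<le> x"
  shows "\<exists>\<eta>>0. \<forall>t\<in>{0..\<eta>}. K * t \<le> cover_primitive a T (x + t) - cover_primitive a T x"
proof -
  obtain n :: nat where "K \<le> real n" using real_arch_simple by blast
  have "open (\<Inter>k<n. T k)" "x \<in> (\<Inter>k<n. T k)" using assms by auto
  then obtain r where "0 < r" and r: "ball x r \<subseteq> (\<Inter>k<n. T k)"
    by (meson openE)
  have "K * t \<le> cover_primitive a T (x + t) - cover_primitive a T x" if t: "t \<in> {0..r / 2}" for t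
  proof -
    have "{x..x + t} \<subseteq> T k" if "k < n" for k
      using t r that \<open>0 < r\<close> by (force simp: ball_def dist_real_def)
    then have "real n * t = (\<Sum>k<n. integral {x..x + t} (indicat_real (T k)))"
      using t by (simp add: integral_indicator_Icc_eq_length)
    also have "\<dots> \<le> (\<Sum>k. integral {x..x + t} (indicat_real (T k)))"
      by (intro sum_le_suminf summable_integral_indicator_cover integral_nonneg integrable_indicator_cover) auto
    also have "\<dots> = cover_primitive a T (x + t) - cover_primitive a T x"
      using t \<open>a \<le> x\<close> by (simp add: cover_primitive_diff)
    finally show ?thesis
      using t \<open>K \<le> real n\<close> by (smt (verit) atLeastAtMost_iff mult_right_mono)
  qed
  then show ?thesis
    using \<open>0 < r\<close> by (intro exI[of _ "r / 2"]) auto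
qed

end

lemma null_set_superlinear_function:
  fixes N :: "real set"
  assumes N: "N \<in> null_sets lebesgue" and "0 < e"
  obtains \<psi> where "continuous_on {a..b} \<psi>" "mono_on {a..} \<psi>" "\<psi> b - \<psi> a \<le> e"
    "\<And>x K. x \<in> N \<Longrightarrow> a \<le> x \<Longrightarrow> \<exists>\<eta>>0. \<forall>t\<in>{0..\<eta>}. K * t \<le> \<psi> (x + t) - \<psi> x"
proof -
  define w where "w k = e / 2 * (1 / 2) ^ k" for k :: nat
  have w_pos: "0 < w k" for k using \<open>0 < e\<close> by (simp add: w_def)
  have "(\<lambda>k. e / 2 * (1 / 2) ^ k) sums (e / 2 * (1 / (1 - 1 / 2)))"
    by (intro sums_mult geometric_sums) simp
  then have w_sums: "w sums e"
    unfolding w_def[abs_def] by simp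
  have "\<forall>k. \<exists>T. open T \<and> N \<subseteq> T \<and> emeasure lebesgue T < ennreal (w k)"
    using null_set_open_cover[OF N w_pos] by metis
  then obtain T where T: "\<And>k. open (T k)" "\<And>k. N \<subseteq> T k" "\<And>k. emeasure lebesgue (T k) < ennreal (w k)"
    by metis
  have T_fmeasurable: "T k \<in> fmeasurable lebesgue" for k
    using T(1,3)[of k] by (intro fmeasurableI) (auto simp: borel_open intro: order.strict_trans)
  have T_measure: "measure lebesgue (T k) \<le> w k" for k
    using T(3)[of k] w_pos[of k] by (simp add: measure_def enn2real_leI less_imp_le)
  have T_summable: "summable (\<lambda>k. measure lebesgue (T k))"
    by (rule summable_comparison_test[OF _ sums_summable[OF w_sums]]) (auto simp: T_measure)
  have "(\<Sum>k. measure lebesgue (T k)) \<le> e"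
    using suminf_le[OF T_measure T_summable sums_summable[OF w_sums]] sums_unique[OF w_sums] by simp
  then have "cover_primitive a T b \<le> e"
    using cover_primitive_le[OF T_fmeasurable T_summable, of a b] by linarith
  then show thesis
    using T(1,2) by (intro that[of "cover_primitive a T"] continuous_on_cover_primitive mono_on_cover_primitive
        cover_primitive_superlinear T_fmeasurable T_summable) (auto simp: cover_primitive_def)
qed

section \<open>Monotonicity of major functions\<close>

lemma laplace_major_add_mono_on:
  fixes U \<psi> :: "real \<Rightarrow> real"
  assumes maj: "laplace_major a b f U"
    and nonneg: "\<And>z. z \<in> {a..<b} \<Longrightarrow> z \<notin> N \<Longrightarrow> 0 \<le> f z"
    and cont: "continuous_on {a..b} \<psi>" and mono: "mono_on {a..b} \<psi>"
    and superlinear: "\<And>z K. z \<in> N \<Longrightarrow> z \<in> {a..<b} \<Longrightarrow> \<exists>\<eta>>0. \<forall>t\<in>{0..\<eta>}. K * t \<le> \<psi> (z + t) - \<psi> z"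
  shows "mono_on {a..b} (\<lambda>x. U x + \<psi> x)"
proof (rule mono_on_if_lap_right_eventually_gt)
  have contU: "continuous_on {a..b} U" using maj by (simp add: laplace_major_def)
  then show "continuous_on {a..b} (\<lambda>x. U x + \<psi> x)" using cont by (intro continuous_on_add)
  fix z c :: real assume z: "z \<in> {a..<b}" and "c < 0"
  let ?\<delta> = "lap_delta a b z"
  have "\<forall>\<^sub>F s in at_top. c < lap_right U z ?\<delta> s + lap_right \<psi> z ?\<delta> s"
  proof (cases "z \<in> N")
    case True
    have "\<forall>\<^sub>F s in at_top. f z - 1 < lap_right U z ?\<delta> s"
      by (rule laplace_major_eventually_gt[OF maj z]) simp
    moreover have "\<forall>\<^sub>F s in at_top. c - (f z - 1) < lap_right \<psi> z ?\<delta> s"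
      using lap_delta_bounds[OF z] continuous_on_lap_window[OF cont z] superlinear[OF True z]
      by (intro lap_right_eventually_gt_if_superlinear) auto
    ultimately show ?thesis by eventually_elim simp
  next
    case False
    then have "\<forall>\<^sub>F s in at_top. c < lap_right U z ?\<delta> s"
      using nonneg[OF z] \<open>c < 0\<close> by (intro laplace_major_eventually_gt[OF maj z]) auto
    moreover have "\<forall>\<^sub>F s in at_top. 0 \<le> lap_right \<psi> z ?\<delta> s"
      using z lap_delta_bounds[OF z]
      by (intro always_eventually allI lap_right_nonneg continuous_on_lap_window[OF cont z]
          mono_on_subset[OF mono]) auto
    ultimately show ?thesis by eventually_elim linarith
  qed
  then show "\<forall>\<^sub>F s in at_top. c < lap_right (\<lambda>x. U x + \<psi> x) z ?\<delta> s"
    by (simp add: lap_right_add[OF continuous_on_lap_window[OF contU z] continuous_on_lap_window[OF cont z]])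
qed

lemma laplace_major_mono_on:
  assumes maj: "laplace_major a b f U"
    and ae: "AE x in lebesgue. x \<in> {a..b} \<longrightarrow> 0 \<le> f x"
  shows "mono_on {a..b} U"
proof (rule mono_onI)
  fix x y assume xy: "x \<in> {a..b}" "y \<in> {a..b}" "x \<le> y"
  obtain N where N: "{z \<in> space lebesgue. \<not> (z \<in> {a..b} \<longrightarrow> 0 \<le> f z)} \<subseteq> N" "N \<in> null_sets lebesgue"
    using AE_E[OF ae] by (metis null_setsI)
  show "U x \<le> U y"
  proof (rule field_le_epsilon)
    fix \<epsilon> :: real assume "0 < \<epsilon>"
    obtain \<psi> where \<psi>: "continuous_on {a..b} \<psi>" "mono_on {a..} \<psi>" "\<psi> b - \<psi> a \<le> \<epsilon>"
      and superlinear: "\<And>z K. z \<in> N \<Longrightarrow> a \<le> z \<Longrightarrow> \<exists>\<eta>>0. \<forall>t\<in>{0..\<eta>}. K * t \<le> \<psi> (z + t) - \<psi> z"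
      using null_set_superlinear_function[OF N(2) \<open>0 < \<epsilon>\<close>, of a b] by blast
    have "mono_on {a..b} (\<lambda>z. U z + \<psi> z)"
    proof (rule laplace_major_add_mono_on[OF maj _ \<psi>(1) mono_on_subset[OF \<psi>(2)]])
      show "\<And>z. z \<in> {a..<b} \<Longrightarrow> z \<notin> N \<Longrightarrow> 0 \<le> f z" using N(1) by auto
      show "\<And>z K. z \<in> N \<Longrightarrow> z \<in> {a..<b} \<Longrightarrow> \<exists>\<eta>>0. \<forall>t\<in>{0..\<eta>}. K * t \<le> \<psi> (z + t) - \<psi> z"
        using superlinear by simp
    qed auto
    from mono_onD[OF this xy] have "U x + \<psi> x \<le> U y + \<psi> y"
      by simp
    moreover have "\<psi> a \<le> \<psi> x" "\<psi> y \<le> \<psi> b"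
      using xy by (auto intro: mono_onD[OF \<psi>(2)])
    ultimately show "U x \<le> U y + \<epsilon>" using \<psi>(3) by linarith
  qed
qed

lemma laplace_major_diff_minor_mono_on:
  assumes maj: "laplace_major a b f U" and mnr: "laplace_minor a b f V"
  shows "mono_on {a..b} (\<lambda>x. U x - V x)"
proof (rule mono_on_if_lap_right_eventually_gt)
  have contU: "continuous_on {a..b} U" using maj by (simp add: laplace_major_def)
  have contV: "continuous_on {a..b} V" using mnr by (simp add: laplace_minor_def)
  show "continuous_on {a..b} (\<lambda>x. U x - V x)" using contU contV by (intro continuous_on_diff)
  fix z c :: real assume z: "z \<in> {a..<b}" and "c < 0"
  have "\<forall>\<^sub>F s in at_top. f z + c / 2 < lap_right U z (lap_delta a b z) s"
    using \<open>c < 0\<close> by (intro laplace_major_eventually_gt[OF maj z]) simp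
  moreover have "\<forall>\<^sub>F s in at_top. lap_right V z (lap_delta a b z) s < f z - c / 2"
    using \<open>c < 0\<close> by (intro laplace_minor_eventually_less[OF mnr z]) simp
  ultimately show "\<forall>\<^sub>F s in at_top. c < lap_right (\<lambda>x. U x - V x) z (lap_delta a b z) s"
    by eventually_elim
      (simp add: lap_right_diff[OF continuous_on_lap_window[OF contU z] continuous_on_lap_window[OF contV z]])
qed

section \<open>Right Laplace quotients with a fixed window\<close>

lemma clamp_real: "clamp a b x = max a (min x b)" if "a \<le> (b::real)"
  using that unfolding clamp_def Basis_real_def by (auto simp: max_def min_def)

lemma continuous_on_clamped:
  fixes G :: "real \<Rightarrow> real"
  assumes "continuous_on {a..b} G"
  shows "continuous_on S (\<lambda>y. G (clamp a b y))"
  using clamp_continuous_on[of a b G] assms by simp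

lemma mono_clamped:
  fixes G :: "real \<Rightarrow> real"
  assumes "a \<le> b" "mono_on {a..b} G"
  shows "mono (\<lambda>y. G (clamp a b y))"
  using assms by (auto intro!: monoI mono_onD[OF assms(2)] simp: clamp_real)

text \<open>With the fixed window \<open>b - a\<close> (which needs \<open>G\<close> beyond \<open>b\<close>, hence the clamping) the
  quotients are continuous in \<open>x\<close>, unlike those with the window \<open>lap_delta a b x\<close>; on
  \<open>[a, b)\<close> both have the same asymptotics.\<close>
definition lap_right_clamped :: "real \<Rightarrow> real \<Rightarrow> (real \<Rightarrow> real) \<Rightarrow> nat \<Rightarrow> real \<Rightarrow> real" where
  "lap_right_clamped a b G k x = lap_right (\<lambda>y. G (clamp a b y)) x (b - a) (real k)"

lemma continuous_lap_right_clamped: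
  assumes "continuous_on {a..b} G"
  shows "continuous_on UNIV (lap_right_clamped a b G k)"
proof -
  have "continuous_on (UNIV \<times> cbox 0 (b - a))
      (\<lambda>(x, t). exp (- real k * t) * (G (clamp a b (x + t)) - G (clamp a b x)))"
    by (auto intro!: continuous_intros continuous_on_compose2[OF continuous_on_clamped[OF assms]]
        simp: split_beta)
  then have "continuous_on UNIV (\<lambda>x. integral (cbox 0 (b - a))
      (\<lambda>t. exp (- real k * t) * (G (clamp a b (x + t)) - G (clamp a b x))))"
    by (rule integral_continuous_on_param)
  then show ?thesis
    unfolding lap_right_clamped_def lap_right_def by (auto intro!: continuous_intros)
qed

lemma lap_right_clamped_nonneg:
  assumes "a \<le> b" "continuous_on {a..b} G" "mono_on {a..b} G"
  shows "0 \<le> lap_right_clamped a b G k x"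
  unfolding lap_right_clamped_def
  using mono_clamped[OF assms(1,3)]
  by (intro lap_right_nonneg continuous_on_clamped[OF assms(2)]) (auto intro: mono_on_subset)

lemma lap_right_clamped_diff:
  assumes "continuous_on {a..b} U" "continuous_on {a..b} V"
  shows "lap_right_clamped a b (\<lambda>y. U y - V y) k x = lap_right_clamped a b U k x - lap_right_clamped a b V k x"
  unfolding lap_right_clamped_def
  by (rule lap_right_diff[OF continuous_on_clamped[OF assms(1)] continuous_on_clamped[OF assms(2)]])

lemma lap_right_clamped_close:
  assumes cont: "continuous_on {a..b} G" and x: "x \<in> {a..<b}" and "0 < e"
  shows "\<forall>\<^sub>F k in sequentially. \<bar>lap_right_clamped a b G k x - lap_right G x (lap_delta a b x) (real k)\<bar> < e"
proof -
  note \<delta> = lap_delta_bounds[OF x]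
  have "lap_right G x (lap_delta a b x) s = lap_right (\<lambda>y. G (clamp a b y)) x (lap_delta a b x) s" for s
    unfolding lap_right_def using x \<delta>
    by (intro arg_cong2[where f = "(*)"] refl integral_cong) (auto simp: clamp_real)
  then have "((\<lambda>s. lap_right (\<lambda>y. G (clamp a b y)) x (b - a) s - lap_right G x (lap_delta a b x) s) \<longlongrightarrow> 0) at_top"
    using lap_right_window_change[OF continuous_on_clamped[OF cont] \<delta>(1)] x \<delta> by simp
  from tendstoD[OF this \<open>0 < e\<close>] show ?thesis
    unfolding lap_right_clamped_def dist_real_def
    by (auto intro: eventually_compose_filterlim[OF _ filterlim_real_sequentially])
qed

lemma laplace_major_clamped_eventually_gt:
  assumes maj: "laplace_major a b f U" and x: "x \<in> {a..<b}" and "c < f x"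
  shows "\<forall>\<^sub>F k in sequentially. c < lap_right_clamped a b U k x"
proof -
  define e where "e = (f x - c) / 2"
  have "0 < e" "c + e < f x" using \<open>c < f x\<close> by (simp_all add: e_def field_simps)
  have "\<forall>\<^sub>F k in sequentially. c + e < lap_right U x (lap_delta a b x) (real k)"
    using eventually_compose_filterlim[OF laplace_major_eventually_gt[OF maj x \<open>c + e < f x\<close>]
        filterlim_real_sequentially] .
  moreover have "\<forall>\<^sub>F k in sequentially. \<bar>lap_right_clamped a b U k x - lap_right U x (lap_delta a b x) (real k)\<bar> < e"
    using maj \<open>0 < e\<close> by (intro lap_right_clamped_close[OF _ x]) (auto simp: laplace_major_def)
  ultimately show ?thesis by eventually_elim (unfold abs_less_iff, linarith)
qed

lemma laplace_minor_clamped_eventually_less: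
  assumes mnr: "laplace_minor a b f V" and x: "x \<in> {a..<b}" and "f x < c"
  shows "\<forall>\<^sub>F k in sequentially. lap_right_clamped a b V k x < c"
proof -
  define e where "e = (c - f x) / 2"
  have "0 < e" "f x < c - e" using \<open>f x < c\<close> by (simp_all add: e_def field_simps)
  have "\<forall>\<^sub>F k in sequentially. lap_right V x (lap_delta a b x) (real k) < c - e"
    using eventually_compose_filterlim[OF laplace_minor_eventually_less[OF mnr x \<open>f x < c - e\<close>]
        filterlim_real_sequentially] .
  moreover have "\<forall>\<^sub>F k in sequentially. \<bar>lap_right_clamped a b V k x - lap_right V x (lap_delta a b x) (real k)\<bar> < e"
    using mnr \<open>0 < e\<close> by (intro lap_right_clamped_close[OF _ x]) (auto simp: laplace_minor_def)
  ultimately show ?thesis by eventually_elim (unfold abs_less_iff, linarith)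
qed

text \<open>Shifting a nondecreasing function, constant outside \<open>[a, b]\<close>, by \<open>t\<close> moves mass at most
  \<open>t * (G b - G a)\<close> across the endpoints.\<close>
lemma integral_clamped_shift_le:
  fixes G :: "real \<Rightarrow> real"
  assumes "a \<le> b" and cont: "continuous_on {a..b} G" and mono: "mono_on {a..b} G" and "0 \<le> t"
  shows "integral {a..b} (\<lambda>x. G (clamp a b (x + t)) - G (clamp a b x)) \<le> t * (G b - G a)"
proof -
  define E where "E y = G (clamp a b y)" for y
  have E_cont: "continuous_on S E" for S
    unfolding E_def by (rule continuous_on_clamped[OF cont])
  have E_int: "E integrable_on {u..v}" for u v
    by (intro integrable_continuous_real E_cont)
  have E_bounds: "G a \<le> E y" "E y \<le> G b" for y
    using assms(1) by (auto simp: E_def clamp_real intro!: mono_onD[OF mono])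
  have shift: "integral {a..b} (\<lambda>x. E (x + t)) = integral {a + t..b + t} E"
    using integral_shift_Icc_real[of a b E t] by (simp add: o_def add.commute)
  have "integral {a..a + t} E + integral {a + t..b + t} E = integral {a..b} E + integral {b..b + t} E"
    using assms(1,4) by (simp add: Henstock_Kurzweil_Integration.integral_combine E_int)
  moreover have "integral {b..b + t} E \<le> integral {b..b + t} (\<lambda>_. G b)"
    using E_bounds by (intro integral_le E_int) auto
  moreover have "integral {a..a + t} (\<lambda>_. G a) \<le> integral {a..a + t} E"
    using E_bounds by (intro integral_le E_int) auto
  moreover have "integral {a..b} (\<lambda>x. E (x + t) - E x) = integral {a..b} (\<lambda>x. E (x + t)) - integral {a..b} E"
    by (intro integral_diff E_int integrable_continuous_real continuous_on_compose2[OF E_cont])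
      (auto intro!: continuous_intros)
  ultimately have "integral {a..b} (\<lambda>x. E (x + t) - E x) \<le> t * (G b - G a)"
    using \<open>0 \<le> t\<close> shift by (simp add: algebra_simps)
  then show ?thesis by (simp add: E_def)
qed

lemma integral_lap_right_clamped_le:
  fixes G :: "real \<Rightarrow> real"
  assumes "a \<le> b" and cont: "continuous_on {a..b} G" and mono: "mono_on {a..b} G"
  shows "integral {a..b} (lap_right_clamped a b G k) \<le> G b - G a"
proof -
  define h where "h x t = exp (- real k * t) * (G (clamp a b (x + t)) - G (clamp a b x))" for x t
  have h_cont: "continuous_on S (\<lambda>(x, t). h x t)" for S
    unfolding h_def
    by (auto intro!: continuous_intros continuous_on_compose2[OF continuous_on_clamped[OF cont]] simp: split_beta)
  have inner_cont: "continuous_on UNIV (\<lambda>t. integral (cbox a b) (\<lambda>x. h x t))"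
    unfolding h_def
    by (intro integral_continuous_on_param)
      (auto intro!: continuous_intros continuous_on_compose2[OF continuous_on_clamped[OF cont]] simp: split_beta)
  have inner_le: "integral {a..b} (\<lambda>x. h x t) \<le> (G b - G a) * (t * exp (- real k * t))" if "0 \<le> t" for t
  proof -
    have "integral {a..b} (\<lambda>x. h x t)
        = exp (- real k * t) * integral {a..b} (\<lambda>x. G (clamp a b (x + t)) - G (clamp a b x))"
      by (simp add: h_def)
    also have "\<dots> \<le> exp (- real k * t) * (t * (G b - G a))"
      by (intro mult_left_mono integral_clamped_shift_le[OF assms that]) auto
    finally show ?thesis by (simp add: algebra_simps)
  qed
  have "integral {a..b} (lap_right_clamped a b G k) = (real k)\<^sup>2 * integral {a..b} (\<lambda>x. integral {0..b - a} (h x))"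
    by (simp add: lap_right_clamped_def[abs_def] lap_right_def h_def[abs_def])
  also have "\<dots> = (real k)\<^sup>2 * integral {0..b - a} (\<lambda>t. integral {a..b} (\<lambda>x. h x t))"
    using integral_swap_continuous[of a 0 b "b - a" h] h_cont by simp
  also have "\<dots> \<le> (real k)\<^sup>2 * integral {0..b - a} (\<lambda>t. (G b - G a) * (t * exp (- real k * t)))"
    using inner_le continuous_on_subset[OF inner_cont]
    by (intro mult_left_mono integral_le integrable_continuous_real continuous_intros) auto
  also have "\<dots> = (G b - G a) * ((real k)\<^sup>2 * integral {0..b - a} (\<lambda>t. t * exp (- real k * t)))"
    by simp
  also have "\<dots> \<le> G b - G a"
    using laplace_first_moment_le_1[of "real k" "b - a"] mono_onD[OF mono, of a b] assms(1)
    by (intro mult_left_le) auto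
  finally show ?thesis .
qed

lemma nn_integral_liminf_lap_right_clamped_le:
  fixes G :: "real \<Rightarrow> real"
  assumes "a \<le> b" and cont: "continuous_on {a..b} G" and mono: "mono_on {a..b} G"
  shows "(\<integral>\<^sup>+x. liminf (\<lambda>k. ennreal (lap_right_clamped a b G k x)) * indicator {a..b} x \<partial>lborel)
    \<le> ennreal (G b - G a)"
proof -
  define u where "u k x = ennreal (lap_right_clamped a b G k x) * indicator {a..b} x" for k x
  have u_borel: "u k \<in> borel_measurable lborel" for k
    using borel_measurable_continuous_onI[OF continuous_lap_right_clamped[OF cont, of k]]
    unfolding u_def by measurable
  have "(\<integral>\<^sup>+x. liminf (\<lambda>k. u k x) \<partial>lborel) \<le> liminf (\<lambda>k. integral\<^sup>N lborel (u k))"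
    by (rule nn_integral_liminf[OF u_borel])
  also have "\<dots> \<le> ennreal (G b - G a)"
  proof (rule Liminf_le, simp, intro always_eventually allI)
    fix k
    have "integral\<^sup>N lborel (u k) = ennreal (integral {a..b} (lap_right_clamped a b G k))"
      unfolding u_def using lap_right_clamped_nonneg[OF assms]
      by (intro nn_integral_has_integral_lebesgue' integrable_integral integrable_continuous_real
          continuous_on_subset[OF continuous_lap_right_clamped[OF cont]]) auto
    then show "integral\<^sup>N lborel (u k) \<le> ennreal (G b - G a)"
      by (simp add: ennreal_leI integral_lap_right_clamped_le[OF assms])
  qed
  moreover have "liminf (\<lambda>k. u k x) = liminf (\<lambda>k. ennreal (lap_right_clamped a b G k x)) * indicator {a..b} x" for x
    by (cases "x \<in> {a..b}") (simp_all add: u_def Liminf_const)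
  ultimately show ?thesis by simp
qed

section \<open>Measurability and integrability\<close>

lemma Liminf_less_imp_frequently:
  fixes X :: "'a \<Rightarrow> 'b::complete_linorder"
  assumes "Liminf F X < C"
  shows "\<exists>\<^sub>F x in F. X x < C"
proof (rule ccontr)
  assume "\<not> (\<exists>\<^sub>F x in F. X x < C)"
  then have "\<forall>\<^sub>F x in F. C \<le> X x" by (simp add: not_frequently not_less)
  then have "C \<le> Liminf F X" by (rule Liminf_bounded)
  with assms show False by simp
qed

lemma Liminf_le_if_frequently_le:
  fixes X :: "'a \<Rightarrow> 'b::complete_linorder"
  assumes "\<exists>\<^sub>F x in F. X x \<le> C"
  shows "Liminf F X \<le> C"
proof (rule ccontr)
  assume "\<not> Liminf F X \<le> C"
  then have "\<forall>\<^sub>F x in F. C < X x" by (intro less_LiminfD) simp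
  with assms show False by (simp add: frequently_def eventually_mono not_le)
qed

lemma ennreal_le_Liminf_ennreal:
  fixes X :: "'a \<Rightarrow> real"
  assumes "\<And>c. c < y \<Longrightarrow> \<forall>\<^sub>F k in F. c < X k"
  shows "ennreal y \<le> Liminf F (\<lambda>k. ennreal (X k))"
proof (subst le_Liminf_iff, intro allI impI)
  fix z assume "z < ennreal y"
  then obtain c where c: "z = ennreal c" "0 \<le> c" "c < y"
    by (cases z rule: ennreal_cases) (auto simp: ennreal_less_iff ennreal_neg)
  from assms[OF c(3)] show "\<forall>\<^sub>F k in F. z < ennreal (X k)"
    by eventually_elim (use c in \<open>simp add: ennreal_less_iff\<close>)
qed

lemma borel_measurable_Inf_liminf_lap_right_clamped:
  fixes G :: "nat \<Rightarrow> real \<Rightarrow> real"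
  assumes "\<And>n. continuous_on {a..b} (G n)"
  shows "(\<lambda>x. INF n. liminf (\<lambda>k. ennreal (lap_right_clamped a b (G n) k x))) \<in> borel_measurable borel"
proof -
  have [measurable]: "lap_right_clamped a b (G n) k \<in> borel_measurable borel" for n k
    by (rule borel_measurable_continuous_onI[OF continuous_lap_right_clamped[OF assms]])
  show ?thesis by measurable
qed

lemma nn_integral_Inf_liminf_lap_right_clamped_le:
  assumes "a \<le> b" "continuous_on {a..b} (G n)" "mono_on {a..b} (G n)"
  shows "(\<integral>\<^sup>+x. (INF n. liminf (\<lambda>k. ennreal (lap_right_clamped a b (G n) k x))) * indicator {a..b} x \<partial>lborel)
    \<le> ennreal (G n b - G n a)"
proof -
  have "(\<integral>\<^sup>+x. (INF n. liminf (\<lambda>k. ennreal (lap_right_clamped a b (G n) k x))) * indicator {a..b} x \<partial>lborel)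
      \<le> (\<integral>\<^sup>+x. liminf (\<lambda>k. ennreal (lap_right_clamped a b (G n) k x)) * indicator {a..b} x \<partial>lborel)"
    by (intro nn_integral_mono mult_right_mono INF_lower) auto
  also have "\<dots> \<le> ennreal (G n b - G n a)"
    by (rule nn_integral_liminf_lap_right_clamped_le[OF assms])
  finally show ?thesis .
qed

lemma obtain_laplace_major_minor_seqs:
  assumes "laplace_integrable_on f a b"
  obtains U V :: "nat \<Rightarrow> real \<Rightarrow> real"
  where "\<And>n. laplace_major a b f (U n)" "\<And>n. laplace_minor a b f (V n)"
    "\<And>e. 0 < e \<Longrightarrow> \<exists>n. (U n b - U n a) - (V n b - V n a) < e"
proof -
  obtain I where I: "(SUP V\<in>{V. laplace_minor a b f V}. ereal (V b - V a)) = ereal I"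
      "(INF U\<in>{U. laplace_major a b f U}. ereal (U b - U a)) = ereal I"
    using assms unfolding laplace_integrable_on_def by blast
  have "\<exists>U. laplace_major a b f U \<and> U b - U a < I + 1 / real (Suc n)" for n
  proof -
    have "(INF U\<in>{U. laplace_major a b f U}. ereal (U b - U a)) < ereal (I + 1 / real (Suc n))"
      unfolding I by simp
    then show ?thesis unfolding INF_less_iff by auto
  qed
  then obtain U where U: "\<And>n. laplace_major a b f (U n)" "\<And>n. U n b - U n a < I + 1 / real (Suc n)"
    by metis
  have "\<exists>V. laplace_minor a b f V \<and> I - 1 / real (Suc n) < V b - V a" for n
  proof -
    have "ereal (I - 1 / real (Suc n)) < (SUP V\<in>{V. laplace_minor a b f V}. ereal (V b - V a))"
      unfolding I by simp
    then show ?thesis unfolding less_SUP_iff by auto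
  qed
  then obtain V where V: "\<And>n. laplace_minor a b f (V n)" "\<And>n. I - 1 / real (Suc n) < V n b - V n a"
    by metis
  show thesis
  proof (rule that[OF U(1) V(1)])
    fix e :: real assume "0 < e"
    obtain n where "2 / e < real (Suc n)"
      using reals_Archimedean2 by (metis less_Suc_eq of_nat_less_iff less_trans)
    then have "2 / real (Suc n) < e" using \<open>0 < e\<close> by (simp add: field_simps)
    then show "\<exists>n. (U n b - U n a) - (V n b - V n a) < e"
      using U(2)[of n] V(2)[of n] by (intro exI[of _ n]) linarith
  qed
qed

lemma AE_Inf_liminf_lap_right_clamped_eq_0:
  fixes G :: "nat \<Rightarrow> real \<Rightarrow> real"
  assumes "a \<le> b" and cont: "\<And>n. continuous_on {a..b} (G n)" and mono: "\<And>n. mono_on {a..b} (G n)"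
    and small: "\<And>e. 0 < e \<Longrightarrow> \<exists>n. G n b - G n a < e"
  shows "AE x in lborel. x \<in> {a..b} \<longrightarrow> (INF n. liminf (\<lambda>k. ennreal (lap_right_clamped a b (G n) k x))) = 0"
proof -
  define Z where "Z x = (INF n. liminf (\<lambda>k. ennreal (lap_right_clamped a b (G n) k x)))" for x
  have Z_borel: "(\<lambda>x. Z x * indicator {a..b} x) \<in> borel_measurable lborel"
    using borel_measurable_Inf_liminf_lap_right_clamped[OF cont] unfolding Z_def by measurable
  have Z_le: "(\<integral>\<^sup>+x. Z x * indicator {a..b} x \<partial>lborel) \<le> ennreal (G n b - G n a)" for n
    unfolding Z_def by (rule nn_integral_Inf_liminf_lap_right_clamped_le[OF assms(1) cont mono])
  have "(\<integral>\<^sup>+x. Z x * indicator {a..b} x \<partial>lborel) \<le> 0"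
  proof (rule ennreal_le_epsilon)
    fix e :: real assume "0 < e"
    then obtain n where "G n b - G n a < e" using small by blast
    then show "(\<integral>\<^sup>+x. Z x * indicator {a..b} x \<partial>lborel) \<le> 0 + ennreal e"
      using Z_le[of n] by (simp add: order_trans[OF _ ennreal_leI])
  qed
  then have "AE x in lborel. Z x * indicator {a..b} x = 0"
    using nn_integral_0_iff_AE[OF Z_borel] by simp
  then show ?thesis
    by eventually_elim (auto simp: Z_def indicator_def)
qed

lemma liminf_lap_right_clamped_major_le:
  assumes maj: "laplace_major a b f U" and mnr: "laplace_minor a b f V"
    and mono: "mono_on {a..b} (\<lambda>y. U y - V y)" and x: "x \<in> {a..<b}"
    and small: "liminf (\<lambda>k. ennreal (lap_right_clamped a b (\<lambda>y. U y - V y) k x)) < ennreal d"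
  shows "liminf (\<lambda>k. ennreal (lap_right_clamped a b U k x)) \<le> ennreal (f x + 2 * d)"
proof -
  have contU: "continuous_on {a..b} U" using maj by (simp add: laplace_major_def)
  have contV: "continuous_on {a..b} V" using mnr by (simp add: laplace_minor_def)
  have cont_diff: "continuous_on {a..b} (\<lambda>y. U y - V y)" using contU contV by (intro continuous_on_diff)
  have "0 < d" using small by (cases "0 < d") (simp_all add: ennreal_neg)
  have "\<exists>\<^sub>F k in sequentially. ennreal (lap_right_clamped a b (\<lambda>y. U y - V y) k x) < ennreal d"
    by (rule Liminf_less_imp_frequently[OF small])
  moreover have "\<forall>\<^sub>F k in sequentially. lap_right_clamped a b V k x < f x + d"
    using \<open>0 < d\<close> by (intro laplace_minor_clamped_eventually_less[OF mnr x]) simp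
  ultimately have "\<exists>\<^sub>F k in sequentially. ennreal (lap_right_clamped a b U k x) \<le> ennreal (f x + 2 * d)"
  proof (rule frequently_eventually_conj[THEN frequently_elim1])
    fix k
    assume k: "lap_right_clamped a b V k x < f x + d \<and>
        ennreal (lap_right_clamped a b (\<lambda>y. U y - V y) k x) < ennreal d"
    have "0 \<le> lap_right_clamped a b (\<lambda>y. U y - V y) k x"
      using x by (intro lap_right_clamped_nonneg cont_diff mono) auto
    with k have "lap_right_clamped a b (\<lambda>y. U y - V y) k x < d" by (simp add: ennreal_less_iff)
    with k show "ennreal (lap_right_clamped a b U k x) \<le> ennreal (f x + 2 * d)"
      by (intro ennreal_leI) (simp add: lap_right_clamped_diff[OF contU contV])
  qed
  then show ?thesis by (rule Liminf_le_if_frequently_le)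
qed

lemma ennreal_eq_Inf_liminf_lap_right_clamped:
  assumes maj: "\<And>n. laplace_major a b f (U n)" and mnr: "\<And>n. laplace_minor a b f (V n)"
    and mono: "\<And>n. mono_on {a..b} (\<lambda>y. U n y - V n y)" and x: "x \<in> {a..<b}" and "0 \<le> f x"
    and small: "(INF n. liminf (\<lambda>k. ennreal (lap_right_clamped a b (\<lambda>y. U n y - V n y) k x))) = 0"
  shows "ennreal (f x) = (INF n. liminf (\<lambda>k. ennreal (lap_right_clamped a b (U n) k x)))"
proof (rule antisym)
  show "ennreal (f x) \<le> (INF n. liminf (\<lambda>k. ennreal (lap_right_clamped a b (U n) k x)))"
    by (intro INF_greatest ennreal_le_Liminf_ennreal laplace_major_clamped_eventually_gt[OF maj x])
  show "(INF n. liminf (\<lambda>k. ennreal (lap_right_clamped a b (U n) k x))) \<le> ennreal (f x)"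
  proof (rule ennreal_le_epsilon)
    fix e :: real assume "0 < e"
    then have "(INF n. liminf (\<lambda>k. ennreal (lap_right_clamped a b (\<lambda>y. U n y - V n y) k x))) < ennreal (e / 2)"
      using small by simp
    then obtain n where "liminf (\<lambda>k. ennreal (lap_right_clamped a b (\<lambda>y. U n y - V n y) k x)) < ennreal (e / 2)"
      by (auto simp: INF_less_iff)
    then have "liminf (\<lambda>k. ennreal (lap_right_clamped a b (U n) k x)) \<le> ennreal (f x + 2 * (e / 2))"
      by (rule liminf_lap_right_clamped_major_le[OF maj mnr mono x])
    then show "(INF n. liminf (\<lambda>k. ennreal (lap_right_clamped a b (U n) k x))) \<le> ennreal (f x) + ennreal e"
      using \<open>0 \<le> f x\<close> \<open>0 < e\<close> by (intro INF_lower2[of n]) (auto simp: ennreal_plus)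
  qed
qed

lemma AE_eq_Inf_liminf_lap_right_clamped:
  fixes U V :: "nat \<Rightarrow> real \<Rightarrow> real"
  assumes "a < b" and maj: "\<And>n. laplace_major a b f (U n)" and mnr: "\<And>n. laplace_minor a b f (V n)"
    and gap: "\<And>e. 0 < e \<Longrightarrow> \<exists>n. (U n b - U n a) - (V n b - V n a) < e"
    and ae: "AE x in lebesgue. x \<in> {a..b} \<longrightarrow> 0 \<le> f x"
  shows "AE x in lebesgue. x \<in> {a..b} \<longrightarrow>
    ennreal (f x) = (INF n. liminf (\<lambda>k. ennreal (lap_right_clamped a b (U n) k x)))"
proof -
  have mono: "mono_on {a..b} (\<lambda>y. U n y - V n y)" for n
    by (rule laplace_major_diff_minor_mono_on[OF maj mnr])
  have cont: "continuous_on {a..b} (\<lambda>y. U n y - V n y)" for n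
    using maj[of n] mnr[of n] by (auto simp: laplace_major_def laplace_minor_def intro: continuous_on_diff)
  have "AE x in lborel. x \<in> {a..b} \<longrightarrow>
      (INF n. liminf (\<lambda>k. ennreal (lap_right_clamped a b (\<lambda>y. U n y - V n y) k x))) = 0"
  proof (rule AE_Inf_liminf_lap_right_clamped_eq_0[OF _ cont mono])
    fix e :: real assume "0 < e"
    then obtain n where "(U n b - U n a) - (V n b - V n a) < e" using gap by blast
    then show "\<exists>n. (U n b - V n b) - (U n a - V n a) < e" by (intro exI[of _ n]) linarith
  qed (use \<open>a < b\<close> in simp)
  moreover have "AE x in lborel. x \<noteq> b" by (rule AE_lborel_singleton)
  ultimately have "AE x in lebesgue. x \<in> {a..b} \<longrightarrow> x \<noteq> b \<and>
      (INF n. liminf (\<lambda>k. ennreal (lap_right_clamped a b (\<lambda>y. U n y - V n y) k x))) = 0"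
    by (intro AE_completion) auto
  with ae show ?thesis
    by eventually_elim (use ennreal_eq_Inf_liminf_lap_right_clamped[where U = U and V = V, OF maj mnr mono] in auto)
qed

lemma absolutely_integrable_on_if_AE_eq_ennreal:
  fixes f :: "real \<Rightarrow> real" and \<phi> :: "real \<Rightarrow> ennreal"
  assumes \<phi>: "\<phi> \<in> borel_measurable borel" and S: "S \<in> sets borel"
    and eq: "AE x in lebesgue. x \<in> S \<longrightarrow> \<phi> x = ennreal (f x) \<and> 0 \<le> f x"
    and finite: "(\<integral>\<^sup>+x. \<phi> x * indicator S x \<partial>lborel) < \<infinity>"
  shows "f absolutely_integrable_on S"
proof -
  define g where "g x = indicator S x * enn2real (\<phi> x)" for x
  have g_borel: "g \<in> borel_measurable lborel"
    unfolding g_def using \<phi> S by measurable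
  have "(\<integral>\<^sup>+x. ennreal (g x) \<partial>lborel) \<le> (\<integral>\<^sup>+x. \<phi> x * indicator S x \<partial>lborel)"
    by (intro nn_integral_mono) (auto simp: g_def indicator_def ennreal_enn2real_if)
  then have "integrable lborel g"
    using finite g_borel by (intro integrableI_nonneg) (auto simp: g_def)
  then have g_int: "integrable lebesgue g"
    by (rule integrable_completion[THEN iffD2, rotated]) (rule g_borel)
  have ae_eq: "AE x in lebesgue. g x = indicator S x *\<^sub>R f x"
    using eq by eventually_elim (auto simp: g_def indicator_def)
  have "(\<lambda>x. indicator S x *\<^sub>R f x) \<in> borel_measurable lebesgue"
    by (rule borel_measurable_AE[OF borel_measurable_integrable[OF g_int] ae_eq])
  from g_int this ae_eq have "integrable lebesgue (\<lambda>x. indicator S x *\<^sub>R f x)"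
    by (rule integrable_cong_AE_imp)
  then show ?thesis unfolding set_integrable_def .
qed

theorem theorem5p12:
  fixes f :: "real \<Rightarrow> real" and a b :: real
  assumes "a < b"
    and "laplace_integrable_on f a b"
    and "AE x in lebesgue. x \<in> {a..b} \<longrightarrow> f x \<ge> 0"
  shows "f absolutely_integrable_on {a..b}"
proof -
  obtain U V :: "nat \<Rightarrow> real \<Rightarrow> real" where maj: "\<And>n. laplace_major a b f (U n)" and mnr: "\<And>n. laplace_minor a b f (V n)"
    and gap: "\<And>e. 0 < e \<Longrightarrow> \<exists>n. (U n b - U n a) - (V n b - V n a) < e"
    using obtain_laplace_major_minor_seqs[OF assms(2)] by metis
  have cont: "continuous_on {a..b} (U n)" for n
    using maj by (simp add: laplace_major_def)
  have mono: "mono_on {a..b} (U n)" for n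
    using laplace_major_mono_on[OF maj assms(3)] .
  define \<phi> where "\<phi> x = (INF n. liminf (\<lambda>k. ennreal (lap_right_clamped a b (U n) k x)))" for x
  show ?thesis
  proof (rule absolutely_integrable_on_if_AE_eq_ennreal)
    show "\<phi> \<in> borel_measurable borel"
      unfolding \<phi>_def by (rule borel_measurable_Inf_liminf_lap_right_clamped[OF cont])
    have "AE x in lebesgue. x \<in> {a..b} \<longrightarrow> ennreal (f x) = \<phi> x"
      unfolding \<phi>_def by (rule AE_eq_Inf_liminf_lap_right_clamped[OF assms(1) maj mnr gap assms(3)])
    with assms(3) show "AE x in lebesgue. x \<in> {a..b} \<longrightarrow> \<phi> x = ennreal (f x) \<and> 0 \<le> f x"
      by eventually_elim auto
    show "(\<integral>\<^sup>+x. \<phi> x * indicator {a..b} x \<partial>lborel) < \<infinity>"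
      using nn_integral_Inf_liminf_lap_right_clamped_le[of a b U 0] assms(1) cont mono
      unfolding \<phi>_def by (simp add: le_less_trans)
  qed simp
qed

end
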